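(* Let $T,R,K>0$, $I\ge2$, and let the data $a_i,b_i,c_i,f_i\in W^{1,\infty}([0,T]\times[0,R]\times[0,K])$, $\alpha_i\in W^{1,\infty}([0,T]\times[0,K],\mathbb{R}_+)$, $r\in W^{1,\infty}([0,T]\times[0,K],\mathbb{R}_+)$, $\phi\in W^{1,\infty}([0,T]\times[0,K])$, $\psi$, $g$ satisfy the assumptions listed in the context (in particular $a_i\ge\underline{a}>0$, $\alpha_i\ge\underline{\alpha}>0$, $r\ge0$). Let $u,v\in\mathfrak{C}^{1,2,0}_{\{0\}}(\Omega_T)$ where $u$ is a super solution and $v$ a sub solution, i.e. for all $i$: $$\partial_tu_i-a_i\partial_x^2u_i+b_i\partial_xu_i+c_iu_i-f_i\ge0\ (\text{resp. for }v:\le 0)\ \text{on }(0,T)\times(0,R)\times(0,K),$$ $$\partial_lu(t,0,l)+\sum_{i=1}^I\alpha_i(t,l)\partial_xu_i(t,0,l)-r(t,l)u(t,0,l)-\phi(t,l)\le0\ (\text{resp. for }v:\ge0),\quad (t,l)\in(0,T)\times(0,K),$$ $$\partial_xu_i(t,R,l)\ge0\ (\text{resp. for }v:\le0),\quad (t,l)\in(0,T)\times(0,K).$$ Assume moreover that $u_i(0,x,l)\ge v_i(0,x,l)$ and $u_i(t,x,K)\ge v_i(t,x,K)$ for all $i\in\{1,\dots,I\}$, $t\in[0,T]$, $x\in[0,R]$, $l\in[0,K]$. Then $u_i(t,x,l)\ge v_i(t,x,l)$ for all $i$ and all $(t,x,l)\in[0,T]\times[0,R]\times[0,K]$.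
   Context: $\mathcal{N}_R$ is the star network of $I$ copies of $[0,R]$ glued at $0$; a function on $[0,T]\times\mathcal{N}_R\times[0,K]$ is a family $(h_i)_{i=1}^I$, $h_i:[0,T]\times[0,R]\times[0,K]\to\mathbb{R}$, with $h_i(t,0,l)=h_j(t,0,l)=:h(t,0,l)$. $\Omega_T=(0,T)\times\mathring{\mathcal{N}}_R\times(0,K)$. The class $\mathfrak{C}^{1,2,0}_{\{0\}}(\Omega_T)$ consists of such families that are continuous at the junction, with each $h_i$ continuous on $[0,T]\times[0,R]\times[0,K]$ and continuously differentiable in $x$ on $[0,T]\times[0,R]\times[0,K)$, of class $\mathcal{C}^{1,2,0}$ (one continuous $t$-derivative, two continuous $x$-derivatives) on $(0,T)\times(0,R)\times(0,K)$ with $\partial_th_i,\partial_x^2h_i$ bounded there, with $(t,l)\mapsto h(t,0,l)$ in $\mathcal{C}^{0,1}([0,T]\times[0,K))$ (continuously differentiable in $l$), and with each $h_i$ having a generalized $l$-derivative in $\bigcap_{q\in(1,\infty)}L^q$. Standing assumption on the data (called $(\mathcal{H})$ in the paper): $a_i\ge\underline{a}>0$, $\alpha_i\ge\underline{\alpha}>0$; $\psi$ continuous on $[0,T]\times\mathcal{N}_R$, $\mathcal{C}^{0,1}$ on each closed ray and $\mathcal{C}^{1,2}$ inside; $g=(g_i)$ Lipschitz, continuous at the junction, twice differentiable in $x$, with $l\mapsto g(0,l)$ differentiable; compatibility: $\partial_lg(0,l)+\sum_i\alpha_i(0,l)\partial_xg_i(0,l)-r(0,l)g(0,l)=\phi(0,l)$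 for $l\in[0,K)$, $\partial_xg_i(R,l)=0$ for $l\in[0,K)$, $g_i(x,K)=\psi_i(0,x)$. *)

theory Defs
  imports "HOL-Analysis.Analysis"
begin

text \<open>A function on [0,T] x N_R x [0,K] is a family h :: nat => real => real => real => real,
  the branch h i being a function of (t,x,l); branches are indexed by i in {1..I}.\<close>

definition Dt :: "(real \<Rightarrow> real \<Rightarrow> real \<Rightarrow> real) \<Rightarrow> real \<Rightarrow> real \<Rightarrow> real \<Rightarrow> real \<Rightarrow> real" where
  "Dt h T t x l = vector_derivative (\<lambda>s. h s x l) (at t within {0..T})"

definition Dx :: "(real \<Rightarrow> real \<Rightarrow> real \<Rightarrow> real) \<Rightarrow> real \<Rightarrow> real \<Rightarrow> real \<Rightarrow> real \<Rightarrow> real" where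
  "Dx h R t x l = vector_derivative (\<lambda>y. h t y l) (at x within {0..R})"

definition Dxx :: "(real \<Rightarrow> real \<Rightarrow> real \<Rightarrow> real) \<Rightarrow> real \<Rightarrow> real \<Rightarrow> real \<Rightarrow> real \<Rightarrow> real" where
  "Dxx h R t x l = vector_derivative (\<lambda>y. Dx h R t y l) (at x within {0..R})"

definition Dl :: "(real \<Rightarrow> real \<Rightarrow> real \<Rightarrow> real) \<Rightarrow> real \<Rightarrow> real \<Rightarrow> real \<Rightarrow> real \<Rightarrow> real" where
  "Dl h K t x l = vector_derivative (\<lambda>m. h t x m) (at l within {0..K})"

definition box3 :: "real \<Rightarrow> real \<Rightarrow> real \<Rightarrow> (real \<times> real \<times> real) set" where
  "box3 T R K = {0..T} \<times> {0..R} \<times> {0..K}"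

definition obox3 :: "real \<Rightarrow> real \<Rightarrow> real \<Rightarrow> (real \<times> real \<times> real) set" where
  "obox3 T R K = {0<..<T} \<times> {0<..<R} \<times> {0<..<K}"

text \<open>w is a generalized (weak) derivative of h with respect to the third variable l on the
  open set S: tested against compactly supported continuous functions with continuous
  l-derivative (by mollification this is equivalent to testing against C_c^infinity).\<close>

definition weak_dl :: "(real \<times> real \<times> real \<Rightarrow> real) \<Rightarrow> (real \<times> real \<times> real \<Rightarrow> real)
    \<Rightarrow> (real \<times> real \<times> real) set \<Rightarrow> bool" where
  "weak_dl h w S \<longleftrightarrow>
     (\<forall>\<phi> \<phi>l. (continuous_on UNIV \<phi> \<and> compact (closure {p. \<phi> p \<noteq> 0})
               \<and> closure {p. \<phi> p \<noteq> 0} \<subseteq> S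
               \<and> (\<forall>t x l. ((\<lambda>m. \<phi> (t, x, m)) has_real_derivative \<phi>l (t, x, l)) (at l))
               \<and> continuous_on UNIV \<phi>l)
        \<longrightarrow> (LINT p:S|lborel. h p * \<phi>l p) = - (LINT p:S|lborel. w p * \<phi> p))"

definition in_all_Lq :: "(real \<times> real \<times> real \<Rightarrow> real) \<Rightarrow> (real \<times> real \<times> real) set \<Rightarrow> bool" where
  "in_all_Lq w S \<longleftrightarrow> w \<in> borel_measurable lborel \<and>
     (\<forall>q::real. 1 < q \<longrightarrow> set_integrable lborel S (\<lambda>p. \<bar>w p\<bar> powr q))"

definition C120 :: "nat \<Rightarrow> real \<Rightarrow> real \<Rightarrow> real \<Rightarrow> (nat \<Rightarrow> real \<Rightarrow> real \<Rightarrow> real \<Rightarrow> real) \<Rightarrow> bool" where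
  "C120 I T R K h \<longleftrightarrow>
    (\<forall>i\<in>{1..I}. \<forall>j\<in>{1..I}. \<forall>t\<in>{0..T}. \<forall>l\<in>{0..K}. h i t 0 l = h j t 0 l) \<and>
    (\<forall>i\<in>{1..I}.
       continuous_on (box3 T R K) (\<lambda>(t, x, l). h i t x l) \<and>
       (\<forall>t\<in>{0..T}. \<forall>x\<in>{0..R}. \<forall>l\<in>{0..<K}.
          ((\<lambda>y. h i t y l) has_real_derivative Dx (h i) R t x l) (at x within {0..R})) \<and>
       continuous_on ({0..T} \<times> {0..R} \<times> {0..<K}) (\<lambda>(t, x, l). Dx (h i) R t x l) \<and>
       (\<forall>t\<in>{0<..<T}. \<forall>x\<in>{0<..<R}. \<forall>l\<in>{0<..<K}.
          ((\<lambda>s. h i s x l) has_real_derivative Dt (h i) T t x l) (at t) \<and>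
          ((\<lambda>y. Dx (h i) R t y l) has_real_derivative Dxx (h i) R t x l) (at x)) \<and>
       continuous_on (obox3 T R K) (\<lambda>(t, x, l). Dt (h i) T t x l) \<and>
       continuous_on (obox3 T R K) (\<lambda>(t, x, l). Dx (h i) R t x l) \<and>
       continuous_on (obox3 T R K) (\<lambda>(t, x, l). Dxx (h i) R t x l) \<and>
       bounded ((\<lambda>(t, x, l). Dt (h i) T t x l) ` obox3 T R K) \<and>
       bounded ((\<lambda>(t, x, l). Dxx (h i) R t x l) ` obox3 T R K) \<and>
       (\<exists>w. in_all_Lq w (obox3 T R K) \<and>
            weak_dl (\<lambda>(t, x, l). h i t x l) w (obox3 T R K))) \<and>
    continuous_on ({0..T} \<times> {0..K}) (\<lambda>(t, l). h 1 t 0 l) \<and>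
    (\<forall>t\<in>{0..T}. \<forall>l\<in>{0..<K}.
       ((\<lambda>m. h 1 t 0 m) has_real_derivative Dl (h 1) K t 0 l) (at l within {0..K})) \<and>
    continuous_on ({0..T} \<times> {0..<K}) (\<lambda>(t, l). Dl (h 1) K t 0 l)"

text \<open>W^{1,infinity} on a compact box is identified with (continuous representatives that are)
  Lipschitz functions.\<close>

definition W1inf3 :: "(real \<Rightarrow> real \<Rightarrow> real \<Rightarrow> real) \<Rightarrow> (real \<times> real \<times> real) set \<Rightarrow> bool" where
  "W1inf3 h S \<longleftrightarrow> (\<exists>C. C-lipschitz_on S (\<lambda>(t, x, l). h t x l))"

definition W1inf2 :: "(real \<Rightarrow> real \<Rightarrow> real) \<Rightarrow> (real \<times> real) set \<Rightarrow> bool" where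
  "W1inf2 h S \<longleftrightarrow> (\<exists>C. C-lipschitz_on S (\<lambda>(t, l). h t l))"

end

theory Submission
  imports Defs
begin

(* Put w = v - u. For 0 < T' < T, 0 < l' < K and small \<epsilon> > 0, take the maximum over all branches
   and over [0,T'] x [0,R] x [l',K] of  exp (- \<mu> t) w_i(t,x,l) - \<epsilon> (x + \<beta> (2K - l)).
   If w is positive somewhere, this maximum is positive, so it lies neither at t = 0 nor at l = K.
   The weight exp (- \<mu> t) with \<mu> > sup (- c) makes the zero-order term coercive at an interior
   maximum, where the drift is absorbed because \<beta> K > sup |b|; the term \<epsilon> x makes the Neumann
   condition at x = R strict; at the junction the l-derivative acts as a time derivative running
   backwards from l = K, and the term \<epsilon> \<beta> (2K - l) with \<beta> > I sup \<alpha> makes the junction condition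
   strict. Letting T' -> T and l' -> 0 only needs continuity. *)

lemma DERIV_left_endpoint_max:
  fixes f :: "real \<Rightarrow> real"
  assumes "(f has_real_derivative D) (at x within {x..b})" "x < b"
    and "\<And>y. x \<le> y \<Longrightarrow> y \<le> b \<Longrightarrow> f y \<le> f x"
  shows "D \<le> 0"
proof -
  have "((\<lambda>y. (f y - f x) / (y - x)) \<longlongrightarrow> D) (at_right x)"
    using assms(1) at_within_Icc_at_right[OF assms(2)] by (simp add: has_field_derivative_iff)
  moreover have "\<forall>\<^sub>F y in at_right x. (f y - f x) / (y - x) \<le> 0"
    unfolding eventually_at_right_field using assms(2,3)
    by (intro exI[of _ b]) (auto intro!: divide_nonpos_pos)
  ultimately show ?thesis
    by (rule tendsto_upperbound) simp
qed

lemma DERIV_right_endpoint_max: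
  fixes f :: "real \<Rightarrow> real"
  assumes "(f has_real_derivative D) (at x within {a..x})" "a < x"
    and "\<And>y. a \<le> y \<Longrightarrow> y \<le> x \<Longrightarrow> f y \<le> f x"
  shows "0 \<le> D"
proof -
  have "((\<lambda>y. (f y - f x) / (y - x)) \<longlongrightarrow> D) (at_left x)"
    using assms(1) at_within_Icc_at_left[OF assms(2)] by (simp add: has_field_derivative_iff)
  moreover have "\<forall>\<^sub>F y in at_left x. 0 \<le> (f y - f x) / (y - x)"
    unfolding eventually_at_left_field using assms(2,3)
    by (intro exI[of _ a]) (auto intro!: divide_nonpos_neg)
  ultimately show ?thesis
    by (rule tendsto_lowerbound) simp
qed

lemma DERIV_local_max_second:
  fixes f f' :: "real \<Rightarrow> real"
  assumes ax: "a < x" and xb: "x < b"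
    and f': "\<And>y. a < y \<Longrightarrow> y < b \<Longrightarrow> (f has_real_derivative f' y) (at y)"
    and f'': "(f' has_real_derivative D) (at x)"
    and max: "\<And>y. a < y \<Longrightarrow> y < b \<Longrightarrow> f y \<le> f x"
  shows "D \<le> 0"
proof (rule ccontr)
  assume "\<not> D \<le> 0"
  have "f' x = 0"
    using ax xb max by (intro DERIV_local_max[OF f'[OF ax xb], of "min (x - a) (b - x)"])
      (auto simp: abs_less_iff)
  moreover have "((\<lambda>y. (f' y - f' x) / (y - x)) \<longlongrightarrow> D) (at_right x)"
    using has_field_derivative_at_within[OF f'', of "{x<..}"] by (simp add: has_field_derivative_iff)
  then have "\<forall>\<^sub>F y in at_right x. 0 < (f' y - f' x) / (y - x)"
    using \<open>\<not> D \<le> 0\<close> by (auto intro: order_tendstoD(1))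
  ultimately obtain c where c: "x < c" "\<And>y. x < y \<Longrightarrow> y < c \<Longrightarrow> 0 < f' y"
    by (auto simp: eventually_at_right_field zero_less_divide_iff)
  define y where "y = (x + min c b) / 2"
  have y: "x < y" "y < c" "y < b"
    using c(1) xb by (auto simp: y_def)
  obtain z where z: "x < z" "z < y" "f y - f x = (y - x) * f' z"
    using MVT2[of x y f f'] y ax f' by force
  moreover have "0 < (y - x) * f' z"
    using c(2)[of z] y z by simp
  ultimately have "f x < f y"
    by simp
  with max[of y] ax y show False
    by simp
qed

lemma continuous_on_family_bounded:
  fixes h :: "'i \<Rightarrow> 'a::topological_space \<Rightarrow> real"
  assumes "compact S" "finite A" "\<And>i. i \<in> A \<Longrightarrow> continuous_on S (h i)"
  obtains M where "\<And>i q. i \<in> A \<Longrightarrow> q \<in> S \<Longrightarrow> \<bar>h i q\<bar> \<le> M"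
proof -
  have "compact (\<Union>i\<in>A. h i ` S)"
    using assms by (intro compact_UN compact_continuous_image) auto
  then obtain M where "\<forall>y\<in>(\<Union>i\<in>A. h i ` S). \<bar>y\<bar> \<le> M"
    using compact_imp_bounded bounded_real by metis
  then show ?thesis
    using that by blast
qed

lemma W1inf3_family_bounded:
  assumes "finite A" "\<And>i. i \<in> A \<Longrightarrow> W1inf3 (h i) (box3 T R K)"
  obtains M where
    "\<And>i t x l. i \<in> A \<Longrightarrow> t \<in> {0..T} \<Longrightarrow> x \<in> {0..R} \<Longrightarrow> l \<in> {0..K} \<Longrightarrow> \<bar>h i t x l\<bar> \<le> M"
proof -
  have "compact (box3 T R K)"
    unfolding box3_def by (intro compact_Times compact_Icc)
  moreover have "continuous_on (box3 T R K) (\<lambda>(t, x, l). h i t x l)" if "i \<in> A" for i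
    using assms(2)[OF that] lipschitz_on_continuous_on unfolding W1inf3_def by blast
  ultimately obtain M where "\<And>i q. i \<in> A \<Longrightarrow> q \<in> box3 T R K \<Longrightarrow> \<bar>(\<lambda>(t, x, l). h i t x l) q\<bar> \<le> M"
    using continuous_on_family_bounded[of "box3 T R K" A "\<lambda>i (t, x, l). h i t x l"] assms(1)
    by metis
  then show ?thesis
    using that unfolding box3_def by fastforce
qed

lemma W1inf2_family_bounded:
  assumes "finite A" "\<And>i. i \<in> A \<Longrightarrow> W1inf2 (h i) ({0..T} \<times> {0..K})"
  obtains M where "\<And>i t l. i \<in> A \<Longrightarrow> t \<in> {0..T} \<Longrightarrow> l \<in> {0..K} \<Longrightarrow> \<bar>h i t l\<bar> \<le> M"
proof -
  have "continuous_on ({0..T} \<times> {0..K}) (\<lambda>(t, l). h i t l)" if "i \<in> A" for i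
    using assms(2)[OF that] lipschitz_on_continuous_on unfolding W1inf2_def by blast
  then obtain M where "\<And>i q. i \<in> A \<Longrightarrow> q \<in> {0..T} \<times> {0..K} \<Longrightarrow> \<bar>(\<lambda>(t, l). h i t l) q\<bar> \<le> M"
    using continuous_on_family_bounded[of "{0..T} \<times> {0..K}" A "\<lambda>i (t, l). h i t l"] assms(1)
    by (metis compact_Icc compact_Times)
  then show ?thesis
    using that by fastforce
qed

locale junction_regular =
  fixes I :: nat and T R K :: real
    and w wt wx wxx :: "nat \<Rightarrow> real \<Rightarrow> real \<Rightarrow> real \<Rightarrow> real" and wl :: "real \<Rightarrow> real \<Rightarrow> real"
  assumes continuous_w: "\<And>i. i \<in> {1..I} \<Longrightarrow> continuous_on (box3 T R K) (\<lambda>(t, x, l). w i t x l)"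
    and junction_continuous: "\<And>i j t l. i \<in> {1..I} \<Longrightarrow> j \<in> {1..I} \<Longrightarrow> t \<in> {0..T} \<Longrightarrow> l \<in> {0..K}
      \<Longrightarrow> w i t 0 l = w j t 0 l"
    and has_wx: "\<And>i t x l. i \<in> {1..I} \<Longrightarrow> t \<in> {0<..<T} \<Longrightarrow> x \<in> {0..R} \<Longrightarrow> l \<in> {0<..<K}
      \<Longrightarrow> ((\<lambda>y. w i t y l) has_real_derivative wx i t x l) (at x within {0..R})"
    and has_wt: "\<And>i t x l. i \<in> {1..I} \<Longrightarrow> t \<in> {0<..<T} \<Longrightarrow> x \<in> {0<..<R} \<Longrightarrow> l \<in> {0<..<K}
      \<Longrightarrow> ((\<lambda>s. w i s x l) has_real_derivative wt i t x l) (at t)"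
    and has_wxx: "\<And>i t x l. i \<in> {1..I} \<Longrightarrow> t \<in> {0<..<T} \<Longrightarrow> x \<in> {0<..<R} \<Longrightarrow> l \<in> {0<..<K}
      \<Longrightarrow> ((\<lambda>y. wx i t y l) has_real_derivative wxx i t x l) (at x)"
    and has_wl: "\<And>t l. t \<in> {0<..<T} \<Longrightarrow> l \<in> {0<..<K}
      \<Longrightarrow> ((\<lambda>m. w 1 t 0 m) has_real_derivative wl t l) (at l)"

locale junction_subsolution = junction_regular +
  fixes a b c :: "nat \<Rightarrow> real \<Rightarrow> real \<Rightarrow> real \<Rightarrow> real" and \<alpha> :: "nat \<Rightarrow> real \<Rightarrow> real \<Rightarrow> real"
    and r :: "real \<Rightarrow> real \<Rightarrow> real" and B C A :: real
  assumes T_pos: "0 < T" and R_pos: "0 < R" and K_pos: "0 < K" and I_pos: "1 \<le> I"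
    and a_nonneg: "\<And>i t x l. i \<in> {1..I} \<Longrightarrow> t \<in> {0<..<T} \<Longrightarrow> x \<in> {0<..<R} \<Longrightarrow> l \<in> {0<..<K}
      \<Longrightarrow> 0 \<le> a i t x l"
    and b_bound: "\<And>i t x l. i \<in> {1..I} \<Longrightarrow> t \<in> {0<..<T} \<Longrightarrow> x \<in> {0<..<R} \<Longrightarrow> l \<in> {0<..<K}
      \<Longrightarrow> \<bar>b i t x l\<bar> \<le> B"
    and c_lower: "\<And>i t x l. i \<in> {1..I} \<Longrightarrow> t \<in> {0<..<T} \<Longrightarrow> x \<in> {0<..<R} \<Longrightarrow> l \<in> {0<..<K}
      \<Longrightarrow> - C \<le> c i t x l"
    and \<alpha>_nonneg: "\<And>i t l. i \<in> {1..I} \<Longrightarrow> t \<in> {0<..<T} \<Longrightarrow> l \<in> {0<..<K} \<Longrightarrow> 0 \<le> \<alpha> i t l"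
    and \<alpha>_upper: "\<And>i t l. i \<in> {1..I} \<Longrightarrow> t \<in> {0<..<T} \<Longrightarrow> l \<in> {0<..<K} \<Longrightarrow> \<alpha> i t l \<le> A"
    and r_nonneg: "\<And>t l. t \<in> {0<..<T} \<Longrightarrow> l \<in> {0<..<K} \<Longrightarrow> 0 \<le> r t l"
    and subsolution: "\<And>i t x l. i \<in> {1..I} \<Longrightarrow> t \<in> {0<..<T} \<Longrightarrow> x \<in> {0<..<R} \<Longrightarrow> l \<in> {0<..<K}
      \<Longrightarrow> wt i t x l - a i t x l * wxx i t x l + b i t x l * wx i t x l + c i t x l * w i t x l \<le> 0"
    and junction_condition: "\<And>t l. t \<in> {0<..<T} \<Longrightarrow> l \<in> {0<..<K}
      \<Longrightarrow> 0 \<le> wl t l + (\<Sum>i=1..I. \<alpha> i t l * wx i t 0 l) - r t l * w 1 t 0 l"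
    and neumann: "\<And>i t l. i \<in> {1..I} \<Longrightarrow> t \<in> {0<..<T} \<Longrightarrow> l \<in> {0<..<K} \<Longrightarrow> wx i t R l \<le> 0"
    and initial: "\<And>i x l. i \<in> {1..I} \<Longrightarrow> x \<in> {0..R} \<Longrightarrow> l \<in> {0..K} \<Longrightarrow> w i 0 x l \<le> 0"
    and terminal: "\<And>i t x. i \<in> {1..I} \<Longrightarrow> t \<in> {0..T} \<Longrightarrow> x \<in> {0..R} \<Longrightarrow> w i t x K \<le> 0"
begin

definition \<mu> :: real where "\<mu> = C + 1"

definition \<beta> :: real where "\<beta> = \<bar>B\<bar> / K + real I * \<bar>A\<bar> + 1"

definition penalty :: "real \<Rightarrow> real \<Rightarrow> real" where
  "penalty x l = x + \<beta> * (2 * K - l)"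

definition penalized :: "real \<Rightarrow> nat \<Rightarrow> real \<Rightarrow> real \<Rightarrow> real \<Rightarrow> real" where
  "penalized \<epsilon> i t x l = exp (- \<mu> * t) * w i t x l - \<epsilon> * penalty x l"

lemma \<beta>_gt: "real I * \<bar>A\<bar> < \<beta>"
proof -
  have "0 \<le> \<bar>B\<bar> / K"
    using K_pos by simp
  then show ?thesis
    by (simp add: \<beta>_def)
qed

lemma \<beta>_pos: "0 < \<beta>"
proof -
  have "0 \<le> real I * \<bar>A\<bar>"
    by simp
  with \<beta>_gt show ?thesis
    by linarith
qed

lemma penalty_gt:
  assumes "0 \<le> x" "l \<le> K"
  shows "\<bar>B\<bar> < penalty x l"
proof -
  have "\<beta> * K = \<bar>B\<bar> + (real I * \<bar>A\<bar> + 1) * K"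
    using K_pos by (simp add: \<beta>_def field_simps)
  moreover have "0 < (real I * \<bar>A\<bar> + 1) * K"
    using K_pos by (intro mult_pos_pos add_nonneg_pos) auto
  ultimately have "\<bar>B\<bar> < \<beta> * K"
    by linarith
  also have "\<dots> \<le> \<beta> * (2 * K - l)"
    using assms \<beta>_pos by (intro mult_left_mono) auto
  finally show ?thesis
    using assms(1) by (simp add: penalty_def)
qed

lemma continuous_on_penalized:
  assumes "i \<in> {1..I}"
  shows "continuous_on (box3 T R K) (\<lambda>(t, x, l). penalized \<epsilon> i t x l)"
proof -
  have "continuous_on (box3 T R K) (\<lambda>q. w i (fst q) (fst (snd q)) (snd (snd q)))"
    using continuous_w[OF assms] by (simp add: case_prod_beta')
  then show ?thesis
    unfolding penalized_def penalty_def case_prod_beta' by (intro continuous_intros)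
qed

lemma penalized_has_derivative_x:
  assumes "i \<in> {1..I}" "t \<in> {0<..<T}" "x \<in> {0..R}" "l \<in> {0<..<K}"
  shows "((\<lambda>y. penalized \<epsilon> i t y l) has_real_derivative exp (- \<mu> * t) * wx i t x l - \<epsilon>)
    (at x within {0..R})"
  unfolding penalized_def penalty_def
  by (rule derivative_eq_intros has_wx[OF assms] | simp)+

lemma penalized_has_derivative_t:
  assumes "i \<in> {1..I}" "t \<in> {0<..<T}" "x \<in> {0<..<R}" "l \<in> {0<..<K}"
  shows "((\<lambda>s. penalized \<epsilon> i s x l) has_real_derivative
    exp (- \<mu> * t) * (wt i t x l - \<mu> * w i t x l)) (at t)"
  unfolding penalized_def
  by (rule derivative_eq_intros has_wt[OF assms] refl | simp add: algebra_simps)+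

lemma penalized_has_derivative_l:
  assumes "t \<in> {0<..<T}" "l \<in> {0<..<K}"
  shows "((\<lambda>m. penalized \<epsilon> 1 t 0 m) has_real_derivative exp (- \<mu> * t) * wl t l + \<epsilon> * \<beta>) (at l)"
  unfolding penalized_def penalty_def
  by (rule derivative_eq_intros has_wl[OF assms] refl | simp)+

context
  fixes T' l' \<epsilon> :: real and i0 :: nat and t0 x0 l0 :: real
  assumes T': "0 < T'" "T' < T" and l': "0 < l'" "l' < K" and \<epsilon>: "0 < \<epsilon>"
    and i0: "i0 \<in> {1..I}" and t0: "t0 \<in> {0..T'}" and x0: "x0 \<in> {0..R}" and l0: "l0 \<in> {l'..K}"
    and maximal: "\<And>j t x l. j \<in> {1..I} \<Longrightarrow> t \<in> {0..T'} \<Longrightarrow> x \<in> {0..R} \<Longrightarrow> l \<in> {l'..K}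
      \<Longrightarrow> penalized \<epsilon> j t x l \<le> penalized \<epsilon> i0 t0 x0 l0"
    and positive: "0 < penalized \<epsilon> i0 t0 x0 l0"
begin

lemma max_dominates_penalty: "\<epsilon> * penalty x0 l0 < exp (- \<mu> * t0) * w i0 t0 x0 l0"
  using positive by (simp add: penalized_def)

lemma max_value_pos: "0 < w i0 t0 x0 l0"
proof -
  have "0 < \<epsilon> * penalty x0 l0"
    using \<epsilon> penalty_gt[of x0 l0] x0 l0 by (simp add: order_le_less_trans[OF abs_ge_zero])
  then have "0 < exp (- \<mu> * t0) * w i0 t0 x0 l0"
    using max_dominates_penalty by linarith
  then show ?thesis
    by (simp add: zero_less_mult_iff)
qed

lemma max_point_open: "t0 \<in> {0<..<T}" "l0 \<in> {0<..<K}"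
proof -
  have "t0 \<noteq> 0"
  proof
    assume "t0 = 0"
    then have "w i0 t0 x0 l0 \<le> 0"
      using initial[OF i0 x0, of l0] l0 l' by simp
    with max_value_pos show False
      by simp
  qed
  moreover have "l0 \<noteq> K"
  proof
    assume "l0 = K"
    then have "w i0 t0 x0 l0 \<le> 0"
      using terminal[OF i0 _ x0, of t0] t0 T' by simp
    with max_value_pos show False
      by simp
  qed
  ultimately show "t0 \<in> {0<..<T}" "l0 \<in> {0<..<K}"
    using t0 l0 T' l' by auto
qed

lemma max_not_at_end: "x0 \<noteq> R"
proof
  assume x0R: "x0 = R"
  have "0 \<le> exp (- \<mu> * t0) * wx i0 t0 R l0 - \<epsilon>"
  proof (rule DERIV_right_endpoint_max[OF penalized_has_derivative_x R_pos])
    show "penalized \<epsilon> i0 t0 y l0 \<le> penalized \<epsilon> i0 t0 R l0" if "0 \<le> y" "y \<le> R" for y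
      using maximal[OF i0 t0 _ l0] that x0R by simp
  qed (use i0 max_point_open R_pos in auto)
  moreover have "exp (- \<mu> * t0) * wx i0 t0 R l0 \<le> 0"
    using neumann[OF i0 max_point_open] by (simp add: mult_nonneg_nonpos)
  ultimately show False
    using \<epsilon> by linarith
qed

lemma max_not_at_junction: "x0 \<noteq> 0"
proof
  assume x00: "x0 = 0"
  define E where "E = exp (- \<mu> * t0)"
  have at_junction: "penalized \<epsilon> j t0 0 l0 = penalized \<epsilon> i0 t0 x0 l0" if "j \<in> {1..I}" for j
    using junction_continuous[OF that i0, of t0 l0] max_point_open x00 by (simp add: penalized_def)
  have branch: "E * wx j t0 0 l0 \<le> \<epsilon>" if j: "j \<in> {1..I}" for j
  proof -
    have "E * wx j t0 0 l0 - \<epsilon> \<le> 0"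
      unfolding E_def
    proof (rule DERIV_left_endpoint_max[OF penalized_has_derivative_x R_pos])
      show "penalized \<epsilon> j t0 y l0 \<le> penalized \<epsilon> j t0 0 l0" if "0 \<le> y" "y \<le> R" for y
        using maximal[OF j t0 _ l0] that at_junction[OF j] by simp
    qed (use j max_point_open R_pos in auto)
    then show ?thesis
      by simp
  qed
  have along_junction: "E * wl t0 l0 + \<epsilon> * \<beta> \<le> 0"
    unfolding E_def
  proof (rule DERIV_left_endpoint_max)
    show "((\<lambda>m. penalized \<epsilon> 1 t0 0 m) has_real_derivative exp (- \<mu> * t0) * wl t0 l0 + \<epsilon> * \<beta>)
        (at l0 within {l0..K})"
      using penalized_has_derivative_l[OF max_point_open] by (rule has_field_derivative_at_within)
    show "penalized \<epsilon> 1 t0 0 m \<le> penalized \<epsilon> 1 t0 0 l0" if "l0 \<le> m" "m \<le> K" for m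
      using maximal[of 1 t0 0 m] at_junction[of 1] that I_pos t0 l0 R_pos by simp
  qed (use max_point_open in auto)
  have "E * (\<Sum>j=1..I. \<alpha> j t0 l0 * wx j t0 0 l0) = (\<Sum>j=1..I. \<alpha> j t0 l0 * (E * wx j t0 0 l0))"
    by (simp add: sum_distrib_left algebra_simps)
  also have "\<dots> \<le> (\<Sum>j=1..I. \<bar>A\<bar> * \<epsilon>)"
  proof (rule sum_mono)
    fix j assume j: "j \<in> {1..I}"
    have "\<alpha> j t0 l0 * (E * wx j t0 0 l0) \<le> \<alpha> j t0 l0 * \<epsilon>"
      using branch[OF j] \<alpha>_nonneg[OF j max_point_open] by (rule mult_left_mono)
    also have "\<dots> \<le> \<bar>A\<bar> * \<epsilon>"
      using \<alpha>_upper[OF j max_point_open] \<epsilon> by (intro mult_right_mono) auto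
    finally show "\<alpha> j t0 l0 * (E * wx j t0 0 l0) \<le> \<bar>A\<bar> * \<epsilon>" .
  qed
  finally have sum_le: "E * (\<Sum>j=1..I. \<alpha> j t0 l0 * wx j t0 0 l0) \<le> real I * \<bar>A\<bar> * \<epsilon>"
    by simp
  have "w 1 t0 0 l0 = w i0 t0 x0 l0"
    using junction_continuous[of 1 i0 t0 l0] I_pos i0 max_point_open x00 by auto
  then have "0 \<le> r t0 l0 * w 1 t0 0 l0"
    using r_nonneg[OF max_point_open] max_value_pos by simp
  then have "0 \<le> E * wl t0 l0 + E * (\<Sum>j=1..I. \<alpha> j t0 l0 * wx j t0 0 l0)"
    using junction_condition[OF max_point_open] by (simp add: E_def flip: distrib_left)
  with along_junction sum_le have "\<epsilon> * \<beta> \<le> \<epsilon> * (real I * \<bar>A\<bar>)"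
    by (simp add: algebra_simps)
  with \<epsilon> \<beta>_gt show False
    by simp
qed

lemma max_not_interior: "x0 \<notin> {0<..<R}"
proof
  assume x0': "x0 \<in> {0<..<R}"
  then have x0_bounds: "0 < x0" "x0 < R"
    by auto
  define E where "E = exp (- \<mu> * t0)"
  have E: "0 < E"
    by (simp add: E_def)
  have "0 \<le> E * (wt i0 t0 x0 l0 - \<mu> * w i0 t0 x0 l0)"
    unfolding E_def
  proof (rule DERIV_right_endpoint_max)
    show "((\<lambda>s. penalized \<epsilon> i0 s x0 l0) has_real_derivative
        exp (- \<mu> * t0) * (wt i0 t0 x0 l0 - \<mu> * w i0 t0 x0 l0)) (at t0 within {0..t0})"
      using penalized_has_derivative_t[OF i0 max_point_open(1) x0' max_point_open(2)]
      by (rule has_field_derivative_at_within)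
    show "penalized \<epsilon> i0 s x0 l0 \<le> penalized \<epsilon> i0 t0 x0 l0" if "0 \<le> s" "s \<le> t0" for s
      using maximal[OF i0 _ x0 l0] that t0 by simp
  qed (use max_point_open in auto)
  then have time: "\<mu> * w i0 t0 x0 l0 \<le> wt i0 t0 x0 l0"
    using E by (simp add: zero_le_mult_iff)
  have has_x: "((\<lambda>y. penalized \<epsilon> i0 t0 y l0) has_real_derivative E * wx i0 t0 y l0 - \<epsilon>) (at y)"
    if "0 < y" "y < R" for y
    using penalized_has_derivative_x[OF i0 max_point_open(1) _ max_point_open(2), of y \<epsilon>] that
    by (simp add: E_def at_within_Icc_at)
  have max_x: "penalized \<epsilon> i0 t0 y l0 \<le> penalized \<epsilon> i0 t0 x0 l0" if "0 < y" "y < R" for y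
    using maximal[OF i0 t0 _ l0] that by simp
  have drift: "E * wx i0 t0 x0 l0 = \<epsilon>"
    using DERIV_local_max[OF has_x[OF x0_bounds], of "min x0 (R - x0)"] max_x x0'
    by (force simp: abs_less_iff)
  have "E * wxx i0 t0 x0 l0 \<le> 0"
  proof (rule DERIV_local_max_second[OF _ _ has_x _ max_x])
    show "((\<lambda>y. E * wx i0 t0 y l0 - \<epsilon>) has_real_derivative E * wxx i0 t0 x0 l0) (at x0)"
      using has_wxx[OF i0 max_point_open(1) x0' max_point_open(2)]
      by (auto intro!: derivative_eq_intros)
  qed (use x0' in auto)
  then have diffusion: "a i0 t0 x0 l0 * wxx i0 t0 x0 l0 \<le> 0"
    using E a_nonneg[OF i0 max_point_open(1) x0' max_point_open(2)]
    by (simp add: mult_le_0_iff mult_nonneg_nonpos)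
  have "1 \<le> \<mu> + c i0 t0 x0 l0"
    using c_lower[OF i0 max_point_open(1) x0' max_point_open(2)] by (simp add: \<mu>_def)
  then have "w i0 t0 x0 l0 \<le> (\<mu> + c i0 t0 x0 l0) * w i0 t0 x0 l0"
    using max_value_pos by simp
  with time diffusion subsolution[OF i0 max_point_open(1) x0' max_point_open(2)]
  have "w i0 t0 x0 l0 + b i0 t0 x0 l0 * wx i0 t0 x0 l0 \<le> 0"
    by (simp add: algebra_simps)
  then have "E * (w i0 t0 x0 l0 + b i0 t0 x0 l0 * wx i0 t0 x0 l0) \<le> 0"
    using E by (simp add: mult_nonneg_nonpos)
  also have "E * (w i0 t0 x0 l0 + b i0 t0 x0 l0 * wx i0 t0 x0 l0)
      = E * w i0 t0 x0 l0 + b i0 t0 x0 l0 * (E * wx i0 t0 x0 l0)"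
    by (simp add: algebra_simps)
  finally have "E * w i0 t0 x0 l0 + b i0 t0 x0 l0 * \<epsilon> \<le> 0"
    by (simp add: drift)
  moreover have "- \<bar>B\<bar> * \<epsilon> \<le> b i0 t0 x0 l0 * \<epsilon>"
    using b_bound[OF i0 max_point_open(1) x0' max_point_open(2)] \<epsilon> by (intro mult_right_mono) auto
  moreover have "\<epsilon> * \<bar>B\<bar> \<le> \<epsilon> * penalty x0 l0"
    using penalty_gt[of x0 l0] x0 l0 \<epsilon> by (intro mult_left_mono) auto
  ultimately show False
    using max_dominates_penalty by (simp add: E_def mult.commute)
qed

lemma penalized_max_impossible: False
  using max_not_at_junction max_not_at_end max_not_interior x0 by force

end


(* The equations are only available for t < T and l > 0, hence the truncation. *)
lemma nonpos_on_truncation: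
  assumes "0 < T'" "T' < T" "0 < l'" "l' < K"
    and "i \<in> {1..I}" "t \<in> {0..T'}" "x \<in> {0..R}" "l \<in> {l'..K}"
  shows "w i t x l \<le> 0"
proof (rule ccontr)
  assume "\<not> w i t x l \<le> 0"
  define \<epsilon> where "\<epsilon> = exp (- \<mu> * t) * w i t x l / (2 * penalty x l)"
  have "0 < penalty x l"
    using penalty_gt[of x l] assms(7,8) by (simp add: order_le_less_trans[OF abs_ge_zero])
  then have \<epsilon>: "0 < \<epsilon>" and "0 < penalized \<epsilon> i t x l"
    using \<open>\<not> w i t x l \<le> 0\<close> by (simp_all add: \<epsilon>_def penalized_def)
  define S where "S = {0..T'} \<times> {0..R} \<times> {l'..K}"
  define Z where "Z j = (\<lambda>(t, x, l). penalized \<epsilon> j t x l)" for j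
  have "compact (\<Union>j\<in>{1..I}. Z j ` S)"
  proof (intro compact_UN finite_atLeastAtMost compact_continuous_image)
    show "compact S"
      unfolding S_def by (intro compact_Times compact_Icc)
    show "continuous_on S (Z j)" if "j \<in> {1..I}" for j
      using continuous_on_penalized[OF that] unfolding Z_def
      by (rule continuous_on_subset) (use assms(2,3) in \<open>auto simp: S_def box3_def\<close>)
  qed
  moreover have "(t, x, l) \<in> S"
    using assms by (simp add: S_def)
  ultimately obtain i0 q0 where i0: "i0 \<in> {1..I}" "q0 \<in> S"
    and max: "\<And>j q. j \<in> {1..I} \<Longrightarrow> q \<in> S \<Longrightarrow> Z j q \<le> Z i0 q0"
    using compact_attains_sup[of "\<Union>j\<in>{1..I}. Z j ` S"] assms(5) by blast
  obtain t0 x0 l0 where q0: "q0 = (t0, x0, l0)"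
    using prod_cases3 by blast
  show False
  proof (rule penalized_max_impossible[of T' l' \<epsilon> i0 t0 x0 l0])
    show "penalized \<epsilon> j s y m \<le> penalized \<epsilon> i0 t0 x0 l0"
      if "j \<in> {1..I}" "s \<in> {0..T'}" "y \<in> {0..R}" "m \<in> {l'..K}" for j s y m
      using max[of j "(s, y, m)"] that by (simp add: S_def Z_def q0)
    show "0 < penalized \<epsilon> i0 t0 x0 l0"
      using max[OF assms(5) \<open>(t, x, l) \<in> S\<close>] \<open>0 < penalized \<epsilon> i t x l\<close> by (simp add: Z_def q0)
  qed (use assms \<epsilon> i0 q0 in \<open>auto simp: S_def\<close>)
qed

theorem nonpos:
  assumes "i \<in> {1..I}" "t \<in> {0..T}" "x \<in> {0..R}" "l \<in> {0..K}"
  shows "w i t x l \<le> 0"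
proof -
  let ?D = "{0..<T} \<times> {0..R} \<times> {0<..K}"
  have "closure ?D = box3 T R K"
    using T_pos K_pos by (simp add: closure_Times box3_def)
  moreover have "w i s y m \<le> 0" if "(s, y, m) \<in> ?D" for s y m
    using that K_pos
    by (intro nonpos_on_truncation[of "(s + T) / 2" "m / 2"] assms(1)) auto
  ultimately show ?thesis
    using continuous_le_on_closure[of ?D "\<lambda>(t, x, l). w i t x l" "(t, x, l)" 0]
      continuous_w[OF assms(1)] assms by (force simp: box3_def)
qed

end

lemma C120_difference_regular:
  assumes u: "C120 I T R K u" and v: "C120 I T R K v"
  shows "junction_regular I T R K (\<lambda>i t x l. v i t x l - u i t x l)
    (\<lambda>i t x l. Dt (v i) T t x l - Dt (u i) T t x l) (\<lambda>i t x l. Dx (v i) R t x l - Dx (u i) R t x l)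
    (\<lambda>i t x l. Dxx (v i) R t x l - Dxx (u i) R t x l) (\<lambda>t l. Dl (v 1) K t 0 l - Dl (u 1) K t 0 l)"
proof
  fix i j t x l
  assume i: "i \<in> {1..I}"
  show "continuous_on (box3 T R K) (\<lambda>(t, x, l). v i t x l - u i t x l)"
    using continuous_on_diff[of _ "\<lambda>(t, x, l). v i t x l" "\<lambda>(t, x, l). u i t x l"] u v i
    unfolding C120_def by (simp add: case_prod_beta')
  show "v i t 0 l - u i t 0 l = v j t 0 l - u j t 0 l"
    if "j \<in> {1..I}" "t \<in> {0..T}" "l \<in> {0..K}"
    using u v i that unfolding C120_def by metis
  show "((\<lambda>y. v i t y l - u i t y l) has_real_derivative Dx (v i) R t x l - Dx (u i) R t x l)
      (at x within {0..R})" if "t \<in> {0<..<T}" "x \<in> {0..R}" "l \<in> {0<..<K}"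
    using u v i that unfolding C120_def by (intro DERIV_diff) auto
  show "((\<lambda>s. v i s x l - u i s x l) has_real_derivative Dt (v i) T t x l - Dt (u i) T t x l) (at t)"
    if "t \<in> {0<..<T}" "x \<in> {0<..<R}" "l \<in> {0<..<K}"
    using u v i that unfolding C120_def by (intro DERIV_diff) auto
  show "((\<lambda>y. Dx (v i) R t y l - Dx (u i) R t y l) has_real_derivative
      Dxx (v i) R t x l - Dxx (u i) R t x l) (at x)"
    if "t \<in> {0<..<T}" "x \<in> {0<..<R}" "l \<in> {0<..<K}"
    using u v i that unfolding C120_def by (intro DERIV_diff) auto
next
  fix t l :: real
  assume t: "t \<in> {0<..<T}" and l: "l \<in> {0<..<K}"
  have "((\<lambda>m. v 1 t 0 m) has_real_derivative Dl (v 1) K t 0 l) (at l within {0..K})"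
    "((\<lambda>m. u 1 t 0 m) has_real_derivative Dl (u 1) K t 0 l) (at l within {0..K})"
    using u v t l unfolding C120_def by auto
  moreover have "at l within {0..K} = at l"
    using t l by (intro at_within_Icc_at) auto
  ultimately show "((\<lambda>m. v 1 t 0 m - u 1 t 0 m) has_real_derivative Dl (v 1) K t 0 l - Dl (u 1) K t 0 l)
      (at l)"
    by (auto intro: DERIV_diff)
qed

theorem theorem2p6:
  fixes I :: nat and T R K :: real
    and a b c f :: "nat \<Rightarrow> real \<Rightarrow> real \<Rightarrow> real \<Rightarrow> real"
    and \<alpha> :: "nat \<Rightarrow> real \<Rightarrow> real \<Rightarrow> real"
    and r \<phi> :: "real \<Rightarrow> real \<Rightarrow> real"
    and \<psi> :: "nat \<Rightarrow> real \<Rightarrow> real \<Rightarrow> real"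
    and g :: "nat \<Rightarrow> real \<Rightarrow> real \<Rightarrow> real"
    and u v :: "nat \<Rightarrow> real \<Rightarrow> real \<Rightarrow> real \<Rightarrow> real"
    and a_low \<alpha>_low :: real
  assumes T: "T > 0" and R: "R > 0" and K: "K > 0" and I: "I \<ge> 2"
    (* regularity of the data *)
    and a_reg: "\<forall>i\<in>{1..I}. W1inf3 (a i) (box3 T R K)"
    and b_reg: "\<forall>i\<in>{1..I}. W1inf3 (b i) (box3 T R K)"
    and c_reg: "\<forall>i\<in>{1..I}. W1inf3 (c i) (box3 T R K)"
    and f_reg: "\<forall>i\<in>{1..I}. W1inf3 (f i) (box3 T R K)"
    and \<alpha>_reg: "\<forall>i\<in>{1..I}. W1inf2 (\<alpha> i) ({0..T} \<times> {0..K})"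
    and r_reg: "W1inf2 r ({0..T} \<times> {0..K})"
    and \<phi>_reg: "W1inf2 \<phi> ({0..T} \<times> {0..K})"
    and r_nonneg: "\<forall>t\<in>{0..T}. \<forall>l\<in>{0..K}. r t l \<ge> 0"
    (* ellipticity / junction coefficients *)
    and a_low: "a_low > 0" "\<forall>i\<in>{1..I}. \<forall>t\<in>{0..T}. \<forall>x\<in>{0..R}. \<forall>l\<in>{0..K}. a i t x l \<ge> a_low"
    and \<alpha>_low: "\<alpha>_low > 0" "\<forall>i\<in>{1..I}. \<forall>t\<in>{0..T}. \<forall>l\<in>{0..K}. \<alpha> i t l \<ge> \<alpha>_low"
    (* assumptions on \<psi> *)
    and \<psi>_junc: "\<forall>i\<in>{1..I}. \<forall>j\<in>{1..I}. \<forall>t\<in>{0..T}. \<psi> i t 0 = \<psi> j t 0"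
    and \<psi>_reg: "\<forall>i\<in>{1..I}.
        continuous_on ({0..T} \<times> {0..R}) (\<lambda>(t, x). \<psi> i t x) \<and>
        (\<forall>t\<in>{0..T}. \<forall>x\<in>{0..R}. ((\<lambda>y. \<psi> i t y) has_real_derivative
            vector_derivative (\<lambda>y. \<psi> i t y) (at x within {0..R})) (at x within {0..R})) \<and>
        continuous_on ({0..T} \<times> {0..R}) (\<lambda>(t, x). vector_derivative (\<lambda>y. \<psi> i t y) (at x within {0..R})) \<and>
        (\<forall>t\<in>{0<..<T}. \<forall>x\<in>{0<..<R}.
            ((\<lambda>s. \<psi> i s x) has_real_derivative deriv (\<lambda>s. \<psi> i s x) t) (at t) \<and>
            ((\<lambda>y. \<psi> i t y) has_real_derivative deriv (\<lambda>y. \<psi> i t y) x) (at x) \<and>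
            (deriv (\<lambda>y. \<psi> i t y) has_real_derivative deriv (deriv (\<lambda>y. \<psi> i t y)) x) (at x)) \<and>
        continuous_on ({0<..<T} \<times> {0<..<R}) (\<lambda>(t, x). deriv (\<lambda>s. \<psi> i s x) t) \<and>
        continuous_on ({0<..<T} \<times> {0<..<R}) (\<lambda>(t, x). deriv (\<lambda>y. \<psi> i t y) x) \<and>
        continuous_on ({0<..<T} \<times> {0<..<R}) (\<lambda>(t, x). deriv (deriv (\<lambda>y. \<psi> i t y)) x)"
    (* assumptions on g *)
    and g_lip: "\<forall>i\<in>{1..I}. \<exists>C. C-lipschitz_on ({0..R} \<times> {0..K}) (\<lambda>(x, l). g i x l)"
    and g_junc: "\<forall>i\<in>{1..I}. \<forall>j\<in>{1..I}. \<forall>l\<in>{0..K}. g i 0 l = g j 0 l"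
    and g_dx: "\<forall>i\<in>{1..I}. \<forall>x\<in>{0..R}. \<forall>l\<in>{0..K}.
        ((\<lambda>y. g i y l) has_real_derivative vector_derivative (\<lambda>y. g i y l) (at x within {0..R}))
          (at x within {0..R}) \<and>
        ((\<lambda>z. vector_derivative (\<lambda>y. g i y l) (at z within {0..R})) has_real_derivative
          vector_derivative (\<lambda>z. vector_derivative (\<lambda>y. g i y l) (at z within {0..R})) (at x within {0..R}))
          (at x within {0..R})"
    and g_dl: "\<forall>l\<in>{0..K}. ((\<lambda>m. g 1 0 m) has_real_derivative
        vector_derivative (\<lambda>m. g 1 0 m) (at l within {0..K})) (at l within {0..K})"
    and g_compat0: "\<forall>l\<in>{0..<K}.
        vector_derivative (\<lambda>m. g 1 0 m) (at l within {0..K})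
        + (\<Sum>i=1..I. \<alpha> i 0 l * vector_derivative (\<lambda>y. g i y l) (at 0 within {0..R}))
        - r 0 l * g 1 0 l = \<phi> 0 l"
    and g_compatR: "\<forall>i\<in>{1..I}. \<forall>l\<in>{0..<K}. vector_derivative (\<lambda>y. g i y l) (at R within {0..R}) = 0"
    and g_compatK: "\<forall>i\<in>{1..I}. \<forall>x\<in>{0..R}. g i x K = \<psi> i 0 x"
    (* u super solution, v sub solution *)
    and u_reg: "C120 I T R K u" and v_reg: "C120 I T R K v"
    and u_pde: "\<forall>i\<in>{1..I}. \<forall>t\<in>{0<..<T}. \<forall>x\<in>{0<..<R}. \<forall>l\<in>{0<..<K}.
        Dt (u i) T t x l - a i t x l * Dxx (u i) R t x l + b i t x l * Dx (u i) R t x l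
        + c i t x l * u i t x l - f i t x l \<ge> 0"
    and v_pde: "\<forall>i\<in>{1..I}. \<forall>t\<in>{0<..<T}. \<forall>x\<in>{0<..<R}. \<forall>l\<in>{0<..<K}.
        Dt (v i) T t x l - a i t x l * Dxx (v i) R t x l + b i t x l * Dx (v i) R t x l
        + c i t x l * v i t x l - f i t x l \<le> 0"
    and u_junc: "\<forall>t\<in>{0<..<T}. \<forall>l\<in>{0<..<K}.
        Dl (u 1) K t 0 l + (\<Sum>i=1..I. \<alpha> i t l * Dx (u i) R t 0 l) - r t l * u 1 t 0 l - \<phi> t l \<le> 0"
    and v_junc: "\<forall>t\<in>{0<..<T}. \<forall>l\<in>{0<..<K}.
        Dl (v 1) K t 0 l + (\<Sum>i=1..I. \<alpha> i t l * Dx (v i) R t 0 l) - r t l * v 1 t 0 l - \<phi> t l \<ge> 0"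
    and u_R: "\<forall>i\<in>{1..I}. \<forall>t\<in>{0<..<T}. \<forall>l\<in>{0<..<K}. Dx (u i) R t R l \<ge> 0"
    and v_R: "\<forall>i\<in>{1..I}. \<forall>t\<in>{0<..<T}. \<forall>l\<in>{0<..<K}. Dx (v i) R t R l \<le> 0"
    and init: "\<forall>i\<in>{1..I}. \<forall>x\<in>{0..R}. \<forall>l\<in>{0..K}. u i 0 x l \<ge> v i 0 x l"
    and final: "\<forall>i\<in>{1..I}. \<forall>t\<in>{0..T}. \<forall>x\<in>{0..R}. u i t x K \<ge> v i t x K"
  shows "\<forall>i\<in>{1..I}. \<forall>t\<in>{0..T}. \<forall>x\<in>{0..R}. \<forall>l\<in>{0..K}. u i t x l \<ge> v i t x l"
proof -
  obtain B where B: "\<And>i t x l. i \<in> {1..I} \<Longrightarrow> t \<in> {0..T} \<Longrightarrow> x \<in> {0..R} \<Longrightarrow> l \<in> {0..K}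
      \<Longrightarrow> \<bar>b i t x l\<bar> \<le> B"
    using W1inf3_family_bounded[of "{1..I}" b] b_reg by blast
  obtain C where C: "\<And>i t x l. i \<in> {1..I} \<Longrightarrow> t \<in> {0..T} \<Longrightarrow> x \<in> {0..R} \<Longrightarrow> l \<in> {0..K}
      \<Longrightarrow> \<bar>c i t x l\<bar> \<le> C"
    using W1inf3_family_bounded[of "{1..I}" c] c_reg by blast
  obtain A where A: "\<And>i t l. i \<in> {1..I} \<Longrightarrow> t \<in> {0..T} \<Longrightarrow> l \<in> {0..K} \<Longrightarrow> \<bar>\<alpha> i t l\<bar> \<le> A"
    using W1inf2_family_bounded[of "{1..I}" \<alpha>] \<alpha>_reg by blast
  interpret junction_subsolution I T R K "\<lambda>i t x l. v i t x l - u i t x l"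
    "\<lambda>i t x l. Dt (v i) T t x l - Dt (u i) T t x l" "\<lambda>i t x l. Dx (v i) R t x l - Dx (u i) R t x l"
    "\<lambda>i t x l. Dxx (v i) R t x l - Dxx (u i) R t x l" "\<lambda>t l. Dl (v 1) K t 0 l - Dl (u 1) K t 0 l"
    a b c \<alpha> r B C A
    apply (intro junction_subsolution.intro C120_difference_regular u_reg v_reg
      junction_subsolution_axioms.intro)
    apply (rule T R K)+
    subgoal using I by simp
    subgoal for i t x l using a_low(1) a_low(2)[rule_format, of i t x l] by force
    subgoal using B by force
    subgoal for i t x l using C[of i t x l] by (force simp: abs_le_iff)
    subgoal for i t l using \<alpha>_low(1) \<alpha>_low(2)[rule_format, of i t l] by force
    subgoal for i t l using A[of i t l] by (force simp: abs_le_iff)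
    subgoal using r_nonneg by force
    subgoal for i t x l using u_pde[rule_format, of i t x l] v_pde[rule_format, of i t x l]
      by (simp add: algebra_simps)
    subgoal for t l using u_junc[rule_format, of t l] v_junc[rule_format, of t l]
      by (simp add: algebra_simps sum_subtractf)
    subgoal using u_R v_R by force
    subgoal using init by force
    subgoal using final by force
    done
  show ?thesis
    using nonpos by fastforce
qed

end
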